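(* Let $B$ be the open unit disk and $U=(u,v)\in C^1(\overline B;\mathbb R^2)$ be harmonic in $B$. If $\det DU>0$ on $\partial B$, then for every $\alpha\in[0,2\pi]$ the number $M_\alpha$ is finite, and $M_\alpha=M_0$ for every $\alpha\in[0,2\pi]$.
   Context: For $\alpha\in[0,2\pi]$, $u_\alpha=\cos(\alpha)u+\sin(\alpha)v$, and $M_\alpha$ denotes the sum of the multiplicities of the critical points of $u_\alpha$ in $B$ (a nonnegative integer or $+\infty$); the multiplicity of a critical point $z_0$ of a harmonic function $w$ is the order of vanishing at $z_0$ of the holomorphic function $\partial_x w-i\partial_y w$. *)

theory Defs
  imports "HOL-Analysis.Analysis" "HOL-Library.Extended_Nat"
begin

text \<open>We identify \<open>\<real>\<^sup>2\<close> with \<open>\<complex>\<close> via \<open>(x,y) \<mapsto> x + i y\<close>.\<close>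

definition has_partials :: "(complex \<Rightarrow> real) \<Rightarrow> (complex \<Rightarrow> real) \<Rightarrow> (complex \<Rightarrow> real) \<Rightarrow> complex \<Rightarrow> bool" where
  "has_partials f fx fy z \<longleftrightarrow> (f has_derivative (\<lambda>h. fx z * Re h + fy z * Im h)) (at z)"

definition harmonic_on :: "(complex \<Rightarrow> real) \<Rightarrow> complex set \<Rightarrow> bool" where
  "harmonic_on f S \<longleftrightarrow> open S \<and>
     (\<exists>fx fy fxx fxy fyx fyy.
        (\<forall>z\<in>S. has_partials f fx fy z \<and> has_partials fx fxx fxy z \<and> has_partials fy fyx fyy z
                \<and> fxx z + fyy z = 0) \<and>
        continuous_on S fxx \<and> continuous_on S fxy \<and> continuous_on S fyx \<and> continuous_on S fyy)"

definition cgrad :: "(complex \<Rightarrow> real) \<Rightarrow> complex \<Rightarrow> complex" where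
  "cgrad w z = complex_of_real (frechet_derivative w (at z) 1)
               - \<i> * complex_of_real (frechet_derivative w (at z) \<i>)"

definition vanishing_order :: "(complex \<Rightarrow> complex) \<Rightarrow> complex \<Rightarrow> enat" where
  "vanishing_order g z =
     (if \<exists>n. (deriv ^^ n) g z \<noteq> 0 then enat (LEAST n. (deriv ^^ n) g z \<noteq> 0) else \<infinity>)"

definition crit_mult_sum :: "(complex \<Rightarrow> real) \<Rightarrow> enat" where
  "crit_mult_sum w =
     (let C = {z \<in> ball 0 1. cgrad w z = 0}
      in if finite C then (\<Sum>z\<in>C. vanishing_order (cgrad w) z) else \<infinity>)"

end

theory Submission
  imports Defs "HOL-Complex_Analysis.Complex_Analysis"
begin

text \<open>The complex gradients \<open>f = \<partial>\<^sub>x u - i \<partial>\<^sub>y u\<close> and \<open>g = \<partial>\<^sub>x v - i \<partial>\<^sub>y v\<close> of the harmonic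
  functions are holomorphic, and the critical points of \<open>u\<^sub>\<alpha>\<close>, counted with multiplicity, are
  the zeros of \<open>f\<^sub>\<alpha> = cos \<alpha> f + sin \<alpha> g\<close>. Since \<open>Im (g \<cdot> cnj f) = - det DU < 0\<close> on an annulus
  \<open>r\<^sub>0 < |z| < 1\<close>, a fixed rotation \<open>c\<close> puts \<open>c f\<^sub>\<alpha> / f\<close> in the right half plane there. Hence
  \<open>Ln (c f\<^sub>\<alpha> / f)\<close> is a primitive of \<open>f\<^sub>\<alpha>'/f\<^sub>\<alpha> - f'/f\<close> on the annulus, and by the argument
  principle \<open>f\<^sub>\<alpha>\<close> and \<open>f\<close> have the same (finite) number of zeros, all in \<open>|z| \<le> r\<^sub>0\<close>.\<close>

lemma has_partials_linear_combination:
  assumes "has_partials u ux uy z" and "has_partials v vx vy z"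
  shows "has_partials (\<lambda>z. a * u z + b * v z)
           (\<lambda>z. a * ux z + b * vx z) (\<lambda>z. a * uy z + b * vy z) z"
proof -
  have "((\<lambda>z. a * u z + b * v z) has_derivative
         (\<lambda>h. a * (ux z * Re h + uy z * Im h) + b * (vx z * Re h + vy z * Im h))) (at z)"
    using assms unfolding has_partials_def by (intro derivative_intros)
  then show ?thesis
    unfolding has_partials_def by (simp add: algebra_simps)
qed

lemma cgrad_eq_partials:
  assumes "has_partials w wx wy z"
  shows "cgrad w z = complex_of_real (wx z) - \<i> * complex_of_real (wy z)"
proof -
  have "frechet_derivative w (at z) = (\<lambda>h. wx z * Re h + wy z * Im h)"
    using assms unfolding has_partials_def by (metis frechet_derivative_at)
  then show ?thesis by (simp add: cgrad_def)
qed

lemma has_partials_imp_line_derivative: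
  assumes "has_partials f fx fy (p + of_real t * d)"
  shows "((\<lambda>s. f (p + of_real s * d)) has_real_derivative
           fx (p + of_real t * d) * Re d + fy (p + of_real t * d) * Im d) (at t)"
proof -
  have "((\<lambda>s::real. p + of_real s * d) has_derivative (\<lambda>h. of_real h * d)) (at t)"
    by (auto intro!: derivative_eq_intros)
  from has_derivative_compose[OF this assms[unfolded has_partials_def]]
  show ?thesis
    unfolding has_field_derivative_def o_def
    by (rule has_derivative_eq_rhs) (auto simp: fun_eq_iff algebra_simps)
qed

text \<open>The second difference on the left is symmetric in \<open>d\<close> and \<open>e\<close>; applied with
  \<open>(d, e) = (1, i)\<close> and \<open>(i, 1)\<close> this gives the symmetry of mixed partials.\<close>
lemma second_difference_mean_value:
  fixes u ux uy gx gy :: "complex \<Rightarrow> real" and p d e :: complex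
  defines "q \<equiv> \<lambda>t s. p + of_real t * d + of_real s * e"
  assumes "h > 0"
    and pu: "\<And>t s. t \<in> {0..h} \<Longrightarrow> s \<in> {0..h} \<Longrightarrow> has_partials u ux uy (q t s)"
    and pg: "\<And>t s. t \<in> {0..h} \<Longrightarrow> s \<in> {0..h} \<Longrightarrow>
               has_partials (\<lambda>z. ux z * Re d + uy z * Im d) gx gy (q t s)"
  obtains t s where "t \<in> {0<..<h}" "s \<in> {0<..<h}"
    "u (q h h) - u (q h 0) - u (q 0 h) + u (q 0 0) = h\<^sup>2 * (gx (q t s) * Re e + gy (q t s) * Im e)"
proof -
  define g where "g = (\<lambda>z. ux z * Re d + uy z * Im d)"
  note pg = pg[folded g_def]
  have qt: "q t s = (p + of_real s * e) + of_real t * d" for t s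
    by (simp add: q_def algebra_simps)
  have qs: "q t s = (p + of_real t * d) + of_real s * e" for t s
    by (simp add: q_def algebra_simps)
  have "\<exists>t. 0 < t \<and> t < h \<and> (u (q h h) - u (q h 0)) - (u (q 0 h) - u (q 0 0))
           = (h - 0) * (g (q t h) - g (q t 0))"
  proof (rule MVT2)
    fix t assume "0 \<le> t" "t \<le> h"
    then have "((\<lambda>t. u (q t s)) has_real_derivative g (q t s)) (at t)" if "s \<in> {0..h}" for s
      using has_partials_imp_line_derivative[of u ux uy "p + of_real s * e" t d] pu that
      by (simp add: qt g_def)
    then show "((\<lambda>t. u (q t h) - u (q t 0)) has_real_derivative g (q t h) - g (q t 0)) (at t)"
      using \<open>h > 0\<close> by (intro DERIV_diff) auto
  qed (use \<open>h > 0\<close> in auto)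
  then obtain t where t: "t \<in> {0<..<h}"
    and Dt: "u (q h h) - u (q h 0) - u (q 0 h) + u (q 0 0) = h * (g (q t h) - g (q t 0))"
    by (auto simp: algebra_simps)
  have "\<exists>s. 0 < s \<and> s < h \<and> g (q t h) - g (q t 0) = (h - 0) * (gx (q t s) * Re e + gy (q t s) * Im e)"
  proof (rule MVT2)
    fix s assume "0 \<le> s" "s \<le> h"
    then show "((\<lambda>s. g (q t s)) has_real_derivative gx (q t s) * Re e + gy (q t s) * Im e) (at s)"
      using has_partials_imp_line_derivative[of g gx gy "p + of_real t * d" s e] pg[of t s] t
      by (simp add: qs)
  qed (use \<open>h > 0\<close> in auto)
  then obtain s where "s \<in> {0<..<h}"
    "g (q t h) - g (q t 0) = h * (gx (q t s) * Re e + gy (q t s) * Im e)"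
    by auto
  with t Dt show thesis
    by (intro that[of t s]) (auto simp: power2_eq_square)
qed

lemma exists_mixed_partials_eq_in_ball:
  fixes u ux uy uxx uxy uyx uyy :: "complex \<Rightarrow> real"
  assumes "\<delta> > 0"
    and pu: "\<And>z. z \<in> ball z0 \<delta> \<Longrightarrow> has_partials u ux uy z"
    and pux: "\<And>z. z \<in> ball z0 \<delta> \<Longrightarrow> has_partials ux uxx uxy z"
    and puy: "\<And>z. z \<in> ball z0 \<delta> \<Longrightarrow> has_partials uy uyx uyy z"
  obtains p1 p2 where "p1 \<in> ball z0 \<delta>" "p2 \<in> ball z0 \<delta>" "uxy p1 = uyx p2"
proof -
  define h where "h = \<delta> / 3"
  have "h > 0" using \<open>\<delta> > 0\<close> by (simp add: h_def)
  have near: "z0 + of_real t + \<i> * of_real s \<in> ball z0 \<delta>" if "t \<in> {0..h}" "s \<in> {0..h}" for t s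
  proof -
    have "dist (z0 + of_real t + \<i> * of_real s) z0 \<le> norm (of_real t :: complex) + norm (\<i> * of_real s)"
      using norm_triangle_ineq[of "of_real t" "\<i> * of_real s"] by (simp add: dist_norm)
    also have "\<dots> \<le> 2 * h"
      using that by (auto simp: norm_mult)
    finally show ?thesis
      using \<open>\<delta> > 0\<close> by (simp add: h_def dist_commute)
  qed
  obtain t1 s1 where "t1 \<in> {0<..<h}" "s1 \<in> {0<..<h}" and D1:
    "u (z0 + h + \<i> * h) - u (z0 + h) - u (z0 + \<i> * h) + u z0 = h\<^sup>2 * uxy (z0 + t1 + \<i> * s1)"
    by (rule second_difference_mean_value[where p = z0 and d = 1 and e = \<i>
          and u = u and ux = ux and uy = uy and gx = uxx and gy = uxy, OF \<open>h > 0\<close>])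
       (use near pu pux in \<open>auto simp: mult.commute\<close>)
  obtain s2 t2 where "s2 \<in> {0<..<h}" "t2 \<in> {0<..<h}" and D2:
    "u (z0 + \<i> * h + h) - u (z0 + \<i> * h) - u (z0 + h) + u z0 = h\<^sup>2 * uyx (z0 + \<i> * s2 + t2)"
    by (rule second_difference_mean_value[where p = z0 and d = \<i> and e = 1
          and u = u and ux = ux and uy = uy and gx = uyx and gy = uyy, OF \<open>h > 0\<close>])
       (use near pu puy in \<open>auto simp: ac_simps\<close>)
  show thesis
  proof (rule that)
    show "z0 + t1 + \<i> * s1 \<in> ball z0 \<delta>" "z0 + \<i> * s2 + t2 \<in> ball z0 \<delta>"
      using near[of t1 s1] near[of t2 s2] \<open>t1 \<in> _\<close> \<open>s1 \<in> _\<close> \<open>t2 \<in> _\<close> \<open>s2 \<in> _\<close>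
      by (auto simp: ac_simps)
    show "uxy (z0 + t1 + \<i> * s1) = uyx (z0 + \<i> * s2 + t2)"
      using D1 D2 \<open>h > 0\<close> by (simp add: algebra_simps)
  qed
qed

lemma has_partials_mixed_symmetric:
  fixes u ux uy uxx uxy uyx uyy :: "complex \<Rightarrow> real"
  assumes "open S" "z0 \<in> S"
    and pu: "\<And>z. z \<in> S \<Longrightarrow> has_partials u ux uy z"
    and pux: "\<And>z. z \<in> S \<Longrightarrow> has_partials ux uxx uxy z"
    and puy: "\<And>z. z \<in> S \<Longrightarrow> has_partials uy uyx uyy z"
    and "isCont uxy z0" "isCont uyx z0"
  shows "uxy z0 = uyx z0"
proof -
  have close: "\<bar>uxy z0 - uyx z0\<bar> < 2 * \<epsilon>" if "\<epsilon> > 0" for \<epsilon>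
  proof -
    obtain \<delta>1 where "\<delta>1 > 0" "\<And>w. dist w z0 < \<delta>1 \<Longrightarrow> \<bar>uxy w - uxy z0\<bar> < \<epsilon>"
      using \<open>isCont uxy z0\<close> \<open>\<epsilon> > 0\<close> unfolding continuous_at_eps_delta by (metis dist_real_def)
    moreover obtain \<delta>2 where "\<delta>2 > 0" "\<And>w. dist w z0 < \<delta>2 \<Longrightarrow> \<bar>uyx w - uyx z0\<bar> < \<epsilon>"
      using \<open>isCont uyx z0\<close> \<open>\<epsilon> > 0\<close> unfolding continuous_at_eps_delta by (metis dist_real_def)
    moreover obtain \<delta>3 where "\<delta>3 > 0" "ball z0 \<delta>3 \<subseteq> S"
      using \<open>open S\<close> \<open>z0 \<in> S\<close> openE by blast
    ultimately obtain \<delta> where "\<delta> > 0" and \<delta>: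
      "\<And>w. w \<in> ball z0 \<delta> \<Longrightarrow> w \<in> S \<and> \<bar>uxy w - uxy z0\<bar> < \<epsilon> \<and> \<bar>uyx w - uyx z0\<bar> < \<epsilon>"
      by (intro that[of "min \<delta>1 (min \<delta>2 \<delta>3)"]) (auto simp: dist_commute subset_iff)
    obtain p1 p2 where "p1 \<in> ball z0 \<delta>" "p2 \<in> ball z0 \<delta>" "uxy p1 = uyx p2"
      by (rule exists_mixed_partials_eq_in_ball[OF \<open>\<delta> > 0\<close>]) (use \<delta> pu pux puy in blast)+
    with \<delta>[of p1] \<delta>[of p2] show ?thesis
      by linarith
  qed
  show ?thesis
    using close[of "\<bar>uxy z0 - uyx z0\<bar> / 2"] by (cases "uxy z0 = uyx z0") auto
qed

lemma cgrad_linear_combination: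
  assumes "has_partials u ux uy z" and "has_partials v vx vy z"
  shows "cgrad (\<lambda>z. a * u z + b * v z) z = of_real a * cgrad u z + of_real b * cgrad v z"
  unfolding cgrad_eq_partials[OF has_partials_linear_combination[OF assms, where a = a and b = b]]
    cgrad_eq_partials[OF assms(1)] cgrad_eq_partials[OF assms(2)]
  by (simp add: algebra_simps)

text \<open>The Cauchy--Riemann equations for \<open>ux - i uy\<close> are exactly \<open>uxx + uyy = 0\<close> and
  \<open>uxy = uyx\<close>.\<close>
lemma harmonic_on_imp_cgrad_holomorphic:
  assumes "harmonic_on u S"
  shows "cgrad u holomorphic_on S"
proof -
  obtain ux uy uxx uxy uyx uyy where "open S" and
    P: "\<And>z. z \<in> S \<Longrightarrow> has_partials u ux uy z \<and> has_partials ux uxx uxy z \<and>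
                       has_partials uy uyx uyy z \<and> uxx z + uyy z = 0"
    and "continuous_on S uxy" "continuous_on S uyx"
    using assms unfolding harmonic_on_def by blast
  have sym: "uxy z = uyx z" if "z \<in> S" for z
    by (rule has_partials_mixed_symmetric[OF \<open>open S\<close> that])
       (use P \<open>open S\<close> \<open>continuous_on S uxy\<close> \<open>continuous_on S uyx\<close> that
         in \<open>auto simp: continuous_on_eq_continuous_at\<close>)
  have "(\<lambda>z. complex_of_real (ux z) - \<i> * complex_of_real (uy z)) field_differentiable at z"
    if "z \<in> S" for z
  proof -
    have "((\<lambda>z. complex_of_real (ux z) - \<i> * complex_of_real (uy z)) has_derivative
          (\<lambda>h. of_real (uxx z * Re h + uxy z * Im h) - \<i> * of_real (uyx z * Re h + uyy z * Im h))) (at z)"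
      using P[OF that] unfolding has_partials_def
      by (elim conjE) (intro derivative_intros; assumption)
    moreover have "(\<lambda>h. of_real (uxx z * Re h + uxy z * Im h) - \<i> * of_real (uyx z * Re h + uyy z * Im h))
                   = (*) (of_real (uxx z) - \<i> * of_real (uyx z))"
    proof -
      have "uyy z = - uxx z"
        using P[OF that] by simp
      then show ?thesis
        using sym[OF that] by (auto simp: fun_eq_iff complex_eq_iff algebra_simps)
    qed
    ultimately show ?thesis
      unfolding field_differentiable_def has_field_derivative_def by auto
  qed
  then have "(\<lambda>z. complex_of_real (ux z) - \<i> * complex_of_real (uy z)) holomorphic_on S"
    using \<open>open S\<close> by (simp add: holomorphic_on_open field_differentiable_def)
  moreover have "complex_of_real (ux z) - \<i> * complex_of_real (uy z) = cgrad u z" if "z \<in> S" for z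
    using P[OF that] by (simp add: cgrad_eq_partials[symmetric])
  ultimately show ?thesis
    by (rule holomorphic_transform) (simp only:)
qed

lemma exists_higher_deriv_nonzero:
  assumes "f holomorphic_on S" "open S" "connected S" "z \<in> S" "w \<in> S" "f w \<noteq> 0"
  shows "\<exists>n. (deriv ^^ n) f z \<noteq> 0"
  using holomorphic_fun_eq_0_on_connected[OF assms(1-3) _ assms(4,5)] assms(6) by blast

lemma zorder_eq_Least_higher_deriv_nonzero:
  assumes "f holomorphic_on S" "open S" "z \<in> S" "\<exists>n. (deriv ^^ n) f z \<noteq> 0"
  shows "zorder f z = int (LEAST n. (deriv ^^ n) f z \<noteq> 0)"
proof (rule zorder_zero_eqI[OF assms(1-3)])
  show "(deriv ^^ i) f z = 0" if "i < nat (int (LEAST n. (deriv ^^ n) f z \<noteq> 0))" for i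
    using not_less_Least that by auto
  show "(deriv ^^ nat (int (LEAST n. (deriv ^^ n) f z \<noteq> 0))) f z \<noteq> 0"
    using LeastI_ex[OF assms(4)] by simp
qed simp

lemma vanishing_order_eq_zorder:
  assumes "f holomorphic_on S" "open S" "connected S" "z \<in> S" "w \<in> S" "f w \<noteq> 0"
  obtains n where "vanishing_order f z = enat n" "zorder f z = int n"
proof -
  have "\<exists>n. (deriv ^^ n) f z \<noteq> 0"
    by (rule exists_higher_deriv_nonzero[OF assms])
  with zorder_eq_Least_higher_deriv_nonzero[OF assms(1,2,4)] show thesis
    by (intro that[of "LEAST n. (deriv ^^ n) f z \<noteq> 0"]) (simp_all add: vanishing_order_def)
qed

lemma finite_zeros_if_nonzero_near_sphere:
  assumes "f holomorphic_on ball 0 1" "0 \<le> r0" "r0 < 1"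
    and nz: "\<And>z. z \<in> ball 0 1 \<Longrightarrow> r0 < norm z \<Longrightarrow> f z \<noteq> 0"
  shows "finite {z \<in> ball 0 1. f z = 0}"
proof (cases "f constant_on ball 0 1")
  case True
  define w :: complex where "w = of_real ((1 + r0) / 2)"
  have "norm w = (1 + r0) / 2"
    unfolding w_def norm_of_real using assms(2) by simp
  then have "w \<in> ball 0 1" "r0 < norm w"
    using assms(3) by auto
  with True nz have "{z \<in> ball 0 1. f z = 0} = {}"
    unfolding constant_on_def by fastforce
  then show ?thesis
    by (metis finite.emptyI)
next
  case False
  have "finite {z \<in> cball 0 r0. f z = 0}"
    by (rule holomorphic_compact_finite_zeros[OF assms(1) open_ball
          convex_connected[OF convex_ball] compact_cball _ False])
       (use assms(3) in auto)
  moreover have "{z \<in> ball 0 1. f z = 0} \<subseteq> {z \<in> cball 0 r0. f z = 0}"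
    using nz by (force simp: not_less)
  ultimately show ?thesis
    by (rule finite_subset[rotated])
qed

lemma contour_integral_logderiv_circlepath:
  assumes holo: "f holomorphic_on ball 0 1" and "0 \<le> r0" "r0 < r" "r < 1"
    and nz: "\<And>z. z \<in> ball 0 1 \<Longrightarrow> r0 < norm z \<Longrightarrow> f z \<noteq> 0"
  shows "contour_integral (circlepath 0 r) (\<lambda>z. deriv f z / f z) =
         2 * pi * \<i> * of_int (\<Sum>p\<in>{z \<in> ball 0 1. f z = 0}. zorder f p)"
proof -
  define Z where "Z = {z \<in> ball 0 1. f z = 0}"
  have "finite Z"
    unfolding Z_def by (rule finite_zeros_if_nonzero_near_sphere[OF holo _ _ nz]) (use assms in auto)
  have "contour_integral (circlepath 0 r) (\<lambda>z. deriv f z * 1 / f z) =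
        2 * pi * \<i> * (\<Sum>p\<in>{w \<in> ball 0 1. f w = 0 \<or> w \<in> {}}. winding_number (circlepath 0 r) p * 1 * zorder f p)"
  proof (rule argument_principle)
    show "path_image (circlepath 0 r) \<subseteq> ball 0 1 - {w \<in> ball 0 1. f w = 0 \<or> w \<in> {}}"
      using assms nz by auto
    show "\<forall>z. z \<notin> ball 0 1 \<longrightarrow> winding_number (circlepath 0 r) z = 0"
      using assms by (auto intro!: winding_number_zero_outside[of _ "cball 0 r"] simp: valid_path_imp_path)
  qed (use holo assms \<open>finite Z\<close> in \<open>auto simp: Z_def convex_connected\<close>)
  also have "\<dots> = 2 * pi * \<i> * (\<Sum>p\<in>Z. of_int (zorder f p))"
  proof -
    have "winding_number (circlepath 0 r) p = 1" if "p \<in> Z" for p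
      using that nz[of p] assms by (intro winding_number_circlepath) (force simp: Z_def)+
    then show ?thesis
      by (simp add: Z_def)
  qed
  finally show ?thesis
    by (simp add: Z_def)
qed

text \<open>If \<open>c fa / fb\<close> stays in the right half plane, \<open>Ln (c fa / fb)\<close> is a primitive of the
  difference of the logarithmic derivatives.\<close>
lemma contour_integral_logderiv_eq:
  assumes holo: "fa holomorphic_on A" "fb holomorphic_on A" and "open A"
    and g: "valid_path g" "pathfinish g = pathstart g" "path_image g \<subseteq> A"
    and pos: "\<And>z. z \<in> A \<Longrightarrow> Re (c * fa z * cnj (fb z)) > 0"
  shows "contour_integral g (\<lambda>z. deriv fa z / fa z) = contour_integral g (\<lambda>z. deriv fb z / fb z)"
proof -
  have nz: "fa z \<noteq> 0" "fb z \<noteq> 0" "c \<noteq> 0" if "z \<in> A" for z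
    using pos[OF that] by auto
  have "Re (c * fa z / fb z) > 0" if "z \<in> A" for z
  proof -
    have "c * fa z / fb z = c * fa z * cnj (fb z) / of_real ((cmod (fb z))\<^sup>2)"
      using nz[OF that] complex_norm_square[of "fb z"] by (simp add: field_simps)
    then show ?thesis
      using pos[OF that] nz[OF that] by (simp add: Re_divide_of_real)
  qed
  then have not_nonpos: "c * fa z / fb z \<notin> \<real>\<^sub>\<le>\<^sub>0" if "z \<in> A" for z
    using that by (force simp: complex_nonpos_Reals_iff)
  have "((\<lambda>z. Ln (c * fa z / fb z)) has_field_derivative deriv fa z / fa z - deriv fb z / fb z)
          (at z within A)" if "z \<in> A" for z
  proof -
    have "(fa has_field_derivative deriv fa z) (at z)" "(fb has_field_derivative deriv fb z) (at z)"
      using holo \<open>open A\<close> that by (auto intro: holomorphic_derivI)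
    then have "((\<lambda>z. c * fa z / fb z) has_field_derivative
                (c * deriv fa z * fb z - c * fa z * deriv fb z) / (fb z * fb z)) (at z)"
      using nz(2)[OF that] by (auto intro!: derivative_eq_intros)
    then have "((\<lambda>z. Ln (c * fa z / fb z)) has_field_derivative
           inverse (c * fa z / fb z) * ((c * deriv fa z * fb z - c * fa z * deriv fb z) / (fb z * fb z))) (at z)"
      by (rule DERIV_chain2[of Ln _ "\<lambda>z. c * fa z / fb z" z, OF has_field_derivative_Ln[OF not_nonpos[OF that]]])
    moreover have "inverse (c * fa z / fb z) * ((c * deriv fa z * fb z - c * fa z * deriv fb z) / (fb z * fb z))
                   = deriv fa z / fa z - deriv fb z / fb z"
      using nz[OF that] by (simp add: field_simps)
    ultimately show ?thesis
      by (simp add: has_field_derivative_at_within)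
  qed
  then have "((\<lambda>z. deriv fa z / fa z - deriv fb z / fb z) has_contour_integral 0) g"
    using contour_integral_primitive[OF _ g(1,3)] g(2) by fastforce
  moreover have "(\<lambda>z. deriv fb z / fb z) contour_integrable_on g"
    using nz holo \<open>open A\<close> g
    by (intro contour_integrable_holomorphic_simple[of _ A] holomorphic_intros holomorphic_deriv) auto
  ultimately have "((\<lambda>z. (deriv fa z / fa z - deriv fb z / fb z) + deriv fb z / fb z) has_contour_integral
                     0 + contour_integral g (\<lambda>z. deriv fb z / fb z)) g"
    by (intro has_contour_integral_add has_contour_integral_integral)
  then show ?thesis
    by (simp add: contour_integral_unique)
qed


lemma crit_mult_sum_eq_zorder_sum:
  assumes holo: "f holomorphic_on ball 0 1"
    and cgrad_eq: "\<And>z. z \<in> ball 0 1 \<Longrightarrow> cgrad w z = f z"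
    and fin: "finite {z \<in> ball 0 1. f z = 0}"
    and "z0 \<in> ball 0 1" "f z0 \<noteq> 0"
  shows "crit_mult_sum w = enat (nat (\<Sum>z\<in>{z \<in> ball 0 1. f z = 0}. zorder f z))"
proof -
  define Z where "Z = {z \<in> ball 0 1. f z = 0}"
  have order: "vanishing_order (cgrad w) z = enat (nat (zorder f z)) \<and> zorder f z \<ge> 0"
    if z: "z \<in> ball 0 1" for z
  proof -
    have "\<forall>\<^sub>F y in nhds z. cgrad w y = f y"
      using eventually_nhds_in_open[OF open_ball z] by (rule eventually_mono) (rule cgrad_eq)
    then have "(deriv ^^ n) (cgrad w) z = (deriv ^^ n) f z" for n
      by (rule higher_deriv_cong_ev) (rule refl)
    then have "vanishing_order (cgrad w) z = vanishing_order f z"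
      unfolding vanishing_order_def by presburger
    moreover obtain n where "vanishing_order f z = enat n" "zorder f z = int n"
      by (rule vanishing_order_eq_zorder[OF holo open_ball _ z \<open>z0 \<in> ball 0 1\<close> \<open>f z0 \<noteq> 0\<close>])
         (simp add: convex_connected)
    ultimately show ?thesis
      by simp
  qed
  have "{z \<in> ball 0 1. cgrad w z = 0} = Z"
    using cgrad_eq by (auto simp: Z_def)
  then have "crit_mult_sum w = (\<Sum>z\<in>Z. vanishing_order (cgrad w) z)"
    using fin by (simp add: crit_mult_sum_def Z_def)
  also have "\<dots> = (\<Sum>z\<in>Z. of_nat (nat (zorder f z)))"
    using order by (intro sum.cong) (auto simp: Z_def of_nat_eq_enat)
  also have "\<dots> = of_nat (\<Sum>z\<in>Z. nat (zorder f z))"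
    by (rule of_nat_sum[symmetric])
  also have "(\<Sum>z\<in>Z. zorder f z) = int (\<Sum>z\<in>Z. nat (zorder f z))"
    using order by (auto simp: Z_def of_nat_sum intro!: sum.cong)
  then have "(\<Sum>z\<in>Z. nat (zorder f z)) = nat (\<Sum>z\<in>Z. zorder f z)"
    by (simp only: nat_int)
  finally show ?thesis
    by (simp add: Z_def of_nat_eq_enat)
qed

lemma exists_rotation_into_right_halfplane:
  fixes co si :: real
  assumes "co\<^sup>2 + si\<^sup>2 = 1"
  obtains c where "\<And>F G. Im (G * cnj F) < 0 \<Longrightarrow> Re (c * (of_real co * F + of_real si * G) * cnj F) > 0"
proof (cases "si = 0")
  case True
  then have "co\<^sup>2 = 1"
    using assms by simp
  show thesis
  proof (rule that[of "of_real co"])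
    fix F G :: complex
    assume "Im (G * cnj F) < 0"
    then have "F \<noteq> 0" by auto
    have "Re (of_real co * (of_real co * F + of_real si * G) * cnj F) = co\<^sup>2 * ((Re F)\<^sup>2 + (Im F)\<^sup>2)"
      using True by (simp add: power2_eq_square algebra_simps)
    then show "Re (of_real co * (of_real co * F + of_real si * G) * cnj F) > 0"
      using \<open>co\<^sup>2 = 1\<close> \<open>F \<noteq> 0\<close> by (simp add: complex_neq_0)
  qed
next
  case False
  show thesis
  proof (rule that[of "\<i> * of_real (sgn si)"])
    fix F G :: complex
    assume "Im (G * cnj F) < 0"
    have eq: "Re (\<i> * of_real (sgn si) * (of_real co * F + of_real si * G) * cnj F)
              = - (sgn si * si * Im (G * cnj F))"
      by (simp add: algebra_simps)
    have "sgn si * si > 0"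
      using False by (cases "si > 0") auto
    from mult_pos_neg[OF this \<open>Im (G * cnj F) < 0\<close>]
    show "Re (\<i> * of_real (sgn si) * (of_real co * F + of_real si * G) * cnj F) > 0"
      by (simp only: eq neg_0_less_iff_less)
  qed
qed

lemma exists_radius_positive_near_sphere:
  fixes d :: "'a::{real_normed_vector, heine_borel} \<Rightarrow> real"
  assumes "continuous_on (cball 0 1) d" "\<And>z. z \<in> sphere 0 1 \<Longrightarrow> d z > 0"
  obtains r0 where "0 \<le> r0" "r0 < 1" "\<And>z. z \<in> cball 0 1 \<Longrightarrow> r0 < norm z \<Longrightarrow> d z > 0"
proof (cases "{z \<in> cball 0 1. d z \<le> 0} = {}")
  case True
  then show thesis
    by (intro that[of 0]) force+
next
  case False
  have "closed (cball 0 1 \<inter> d -` {..0})"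
    by (rule continuous_closed_preimage[OF assms(1) closed_cball closed_atMost])
  then have "compact {z \<in> cball 0 1. d z \<le> 0}"
    unfolding compact_eq_bounded_closed by (auto simp: vimage_def Int_def intro: bounded_subset[of "cball 0 1"])
  then obtain k where k: "k \<in> cball 0 1" "d k \<le> 0"
    and k_max: "\<And>z. z \<in> cball 0 1 \<Longrightarrow> d z \<le> 0 \<Longrightarrow> norm z \<le> norm k"
    using continuous_attains_sup[OF _ False continuous_on_norm_id] by auto
  have "norm k \<noteq> 1"
    using assms(2)[of k] k by auto
  show thesis
  proof (rule that[of "norm k"])
    show "norm k < 1"
      using k \<open>norm k \<noteq> 1\<close> by simp
    show "d z > 0" if "z \<in> cball 0 1" "norm k < norm z" for z
      using k_max[OF that(1)] that(2) by fastforce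
  qed simp
qed

lemma zorder_sum_eq_if_Re_pos_near_sphere:
  assumes "fa holomorphic_on ball 0 1" "fb holomorphic_on ball 0 1" "0 \<le> r0" "r0 < 1"
    and pos: "\<And>z. z \<in> ball 0 1 \<Longrightarrow> r0 < norm z \<Longrightarrow> Re (c * fa z * cnj (fb z)) > 0"
  shows "(\<Sum>p\<in>{z \<in> ball 0 1. fa z = 0}. zorder fa p) = (\<Sum>p\<in>{z \<in> ball 0 1. fb z = 0}. zorder fb p)"
proof -
  define r where "r = (1 + r0) / 2"
  have "r0 < r" "r < 1"
    using assms(4) by (auto simp: r_def)
  have nz: "fa z \<noteq> 0" "fb z \<noteq> 0" if "z \<in> ball 0 1" "r0 < norm z" for z
    using pos[OF that] by auto
  have "contour_integral (circlepath 0 r) (\<lambda>z. deriv fa z / fa z) =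
        contour_integral (circlepath 0 r) (\<lambda>z. deriv fb z / fb z)"
    by (rule contour_integral_logderiv_eq[where A = "ball 0 1 - cball 0 r0" and c = c])
       (use assms \<open>r0 < r\<close> \<open>r < 1\<close> in \<open>auto intro: holomorphic_on_subset\<close>)
  then have "2 * pi * \<i> * of_int (\<Sum>p\<in>{z \<in> ball 0 1. fa z = 0}. zorder fa p) =
             2 * pi * \<i> * (of_int (\<Sum>p\<in>{z \<in> ball 0 1. fb z = 0}. zorder fb p) :: complex)"
    using contour_integral_logderiv_circlepath[OF assms(1) assms(3) \<open>r0 < r\<close> \<open>r < 1\<close> nz(1)]
      contour_integral_logderiv_circlepath[OF assms(2) assms(3) \<open>r0 < r\<close> \<open>r < 1\<close> nz(2)]
    by simp
  then show ?thesis
    by (simp only: mult_cancel_left of_int_eq_iff) simp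
qed

lemma crit_mult_sum_linear_combination:
  fixes u v :: "complex \<Rightarrow> real" and co si :: real
  assumes hu: "harmonic_on u (ball 0 1)" and hv: "harmonic_on v (ball 0 1)"
    and "co\<^sup>2 + si\<^sup>2 = 1" and "0 \<le> r0" "r0 < 1"
    and Im_neg: "\<And>z. z \<in> ball 0 1 \<Longrightarrow> r0 < norm z \<Longrightarrow> Im (cgrad v z * cnj (cgrad u z)) < 0"
  shows "crit_mult_sum (\<lambda>z. co * u z + si * v z)
           = enat (nat (\<Sum>p\<in>{z \<in> ball 0 1. cgrad u z = 0}. zorder (cgrad u) p))"
proof -
  define F where "F z = of_real co * cgrad u z + of_real si * cgrad v z" for z
  have holo_u: "cgrad u holomorphic_on ball 0 1" and holo_F: "F holomorphic_on ball 0 1"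
    using harmonic_on_imp_cgrad_holomorphic[OF hu] harmonic_on_imp_cgrad_holomorphic[OF hv]
    unfolding F_def by (auto intro!: holomorphic_intros)
  have "cgrad (\<lambda>z. co * u z + si * v z) z = F z" if "z \<in> ball 0 1" for z
  proof -
    obtain ux uy vx vy where "\<forall>z\<in>ball 0 1. has_partials u ux uy z" "\<forall>z\<in>ball 0 1. has_partials v vx vy z"
      using hu hv unfolding harmonic_on_def by meson
    with that show ?thesis
      unfolding F_def by (intro cgrad_linear_combination) auto
  qed
  moreover obtain c where
    "\<And>F G. Im (G * cnj F) < 0 \<Longrightarrow> Re (c * (of_real co * F + of_real si * G) * cnj F) > 0"
    using exists_rotation_into_right_halfplane[OF \<open>co\<^sup>2 + si\<^sup>2 = 1\<close>] by blast
  then have c: "Re (c * F z * cnj (cgrad u z)) > 0" if "z \<in> ball 0 1" "r0 < norm z" for z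
    using Im_neg[OF that] by (simp add: F_def mult.assoc)
  have nz: "F z \<noteq> 0" if "z \<in> ball 0 1" "r0 < norm z" for z
    using c[OF that] by auto
  define w :: complex where "w = of_real ((1 + r0) / 2)"
  have "norm w = (1 + r0) / 2"
    unfolding w_def norm_of_real using \<open>0 \<le> r0\<close> by simp
  then have w: "w \<in> ball 0 1" "r0 < norm w"
    using \<open>r0 < 1\<close> by auto
  ultimately have "crit_mult_sum (\<lambda>z. co * u z + si * v z)
                   = enat (nat (\<Sum>p\<in>{z \<in> ball 0 1. F z = 0}. zorder F p))"
    by (intro crit_mult_sum_eq_zorder_sum[OF holo_F _ _ w(1) nz[OF w]]
          finite_zeros_if_nonzero_near_sphere[OF holo_F \<open>0 \<le> r0\<close> \<open>r0 < 1\<close> nz])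
  also have "(\<Sum>p\<in>{z \<in> ball 0 1. F z = 0}. zorder F p) = (\<Sum>p\<in>{z \<in> ball 0 1. cgrad u z = 0}. zorder (cgrad u) p)"
    by (rule zorder_sum_eq_if_Re_pos_near_sphere[OF holo_F holo_u \<open>0 \<le> r0\<close> \<open>r0 < 1\<close> c])
  finally show ?thesis .
qed

theorem proposition3p2:
  fixes u v ux uy vx vy :: "complex \<Rightarrow> real"
  assumes "continuous_on (cball 0 1) u" and "continuous_on (cball 0 1) v"
    and "\<forall>z\<in>ball 0 1. has_partials u ux uy z"
    and "\<forall>z\<in>ball 0 1. has_partials v vx vy z"
    and "continuous_on (cball 0 1) ux" and "continuous_on (cball 0 1) uy"
    and "continuous_on (cball 0 1) vx" and "continuous_on (cball 0 1) vy"
    and "harmonic_on u (ball 0 1)" and "harmonic_on v (ball 0 1)"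
    and "\<forall>z\<in>sphere 0 1. ux z * vy z - uy z * vx z > 0"
  shows "\<forall>\<alpha>\<in>{0..2*pi}.
           crit_mult_sum (\<lambda>z. cos \<alpha> * u z + sin \<alpha> * v z) \<noteq> \<infinity> \<and>
           crit_mult_sum (\<lambda>z. cos \<alpha> * u z + sin \<alpha> * v z) =
           crit_mult_sum (\<lambda>z. cos 0 * u z + sin 0 * v z)"
proof -
  obtain r0 where "0 \<le> r0" "r0 < 1"
    and jacobian: "\<And>z. z \<in> cball 0 1 \<Longrightarrow> r0 < norm z \<Longrightarrow> ux z * vy z - uy z * vx z > 0"
    by (rule exists_radius_positive_near_sphere[of "\<lambda>z. ux z * vy z - uy z * vx z"])
       (use assms(5-8,11) in \<open>auto intro!: continuous_intros\<close>)
  have Im_neg: "Im (cgrad v z * cnj (cgrad u z)) < 0" if "z \<in> ball 0 1" "r0 < norm z" for z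
    unfolding cgrad_eq_partials[OF assms(3)[rule_format, OF that(1)]]
      cgrad_eq_partials[OF assms(4)[rule_format, OF that(1)]]
    using jacobian[of z] that by (simp add: algebra_simps)
  have count: "crit_mult_sum (\<lambda>z. cos \<alpha> * u z + sin \<alpha> * v z)
                 = enat (nat (\<Sum>p\<in>{z \<in> ball 0 1. cgrad u z = 0}. zorder (cgrad u) p))" for \<alpha>
    by (rule crit_mult_sum_linear_combination[OF assms(9,10) sin_cos_squared_add2 \<open>0 \<le> r0\<close> \<open>r0 < 1\<close> Im_neg])
  then show ?thesis
    using count[of 0] by simp
qed

end
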